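(* Let $a<b$ and let $A\in M_2(C[a,b])$ be such that $A(t)$ is hermitian for every $t\in[a,b]$ and $A$ is continuously differentiable on $[a,b]$ (entrywise). Suppose that $A(t)$ has two distinct eigenvalues for all $t\in[a,b]$ except possibly at finitely many points, and that at each such exceptional point $t$ the derivative $A'(t)$ has two distinct eigenvalues. Then there exists $U\in M_2(C[a,b])$ with $U(t)$ unitary for every $t\in[a,b]$ such that $U(t)^*A(t)U(t)$ is diagonal for all $t\in[a,b]$.
   Context: $C[a,b]$ denotes the continuous complex-valued functions on $[a,b]$; $M_2(C[a,b])$ the $2\times2$ matrices over it, viewed as continuous maps $[a,b]\to M_2(\mathbb{C})$. $A'(t)$ denotes the entrywise derivative. *)

theory Defs
  imports "HOL-Analysis.Analysis"
begin

text \<open>2x2 complex matrices are rendered as complex^2^2; a matrix-valued function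
 on [a,b] is a map real => complex^2^2 (only its values on [a,b] matter).\<close>

definition cmat_adj :: "complex^'n^'m \<Rightarrow> complex^'m^'n" where
  "cmat_adj M = (\<chi> i j. cnj (M $ j $ i))"

definition cmat_hermitian :: "complex^'n^'n \<Rightarrow> bool" where
  "cmat_hermitian M \<longleftrightarrow> cmat_adj M = M"

definition cmat_unitary :: "complex^'n^'n \<Rightarrow> bool" where
  "cmat_unitary U \<longleftrightarrow> cmat_adj U ** U = mat 1 \<and> U ** cmat_adj U = mat 1"

definition cmat_diagonal :: "complex^'n^'n \<Rightarrow> bool" where
  "cmat_diagonal M \<longleftrightarrow> (\<forall>i j. i \<noteq> j \<longrightarrow> M $ i $ j = 0)"

definition cmat_eigenvalue :: "complex^'n^'n \<Rightarrow> complex \<Rightarrow> bool" where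
  "cmat_eigenvalue M l \<longleftrightarrow> (\<exists>v. v \<noteq> 0 \<and> M *v v = l *s v)"

definition two_distinct_eigenvalues :: "complex^2^2 \<Rightarrow> bool" where
  "two_distinct_eigenvalues M \<longleftrightarrow>
     (\<exists>l m. l \<noteq> m \<and> cmat_eigenvalue M l \<and> cmat_eigenvalue M m)"

end

theory Submission
  imports Defs
begin

text \<open>
  A hermitian \<open>2\<times>2\<close> matrix splits as \<open>A = (tr(A) I + B) / 2\<close> with
  \<open>B = 2A - tr(A) I\<close> traceless hermitian; \<open>A\<close> has a double eigenvalue exactly where
  \<open>B\<close> vanishes, and every eigenvector of \<open>B\<close> is one of \<open>A\<close>. Away from the finitely
  many zeros of \<open>B\<close> the direction \<open>B/\<parallel>B\<parallel>\<close> is continuous, and at a zero \<open>t\<close> its one-sided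
  limits are \<open>\<plusminus>B'(t)/\<parallel>B'(t)\<parallel>\<close>, where \<open>B'(t) \<noteq> 0\<close> because \<open>A'(t)\<close> is not scalar. Flipping
  the sign at every zero therefore gives a continuous unit traceless hermitian \<open>N(t)\<close> with
  \<open>B(t) = r N(t)\<close>. The projections \<open>P(t)\<close> onto the positive eigenline of \<open>N(t)\<close> depend
  continuously on \<open>t\<close>, and a nonzero vector of their ranges can be carried along \<open>[a,b]\<close> in
  steps of uniform length: if \<open>P(t)\<close> is close to \<open>P(s)\<close>, it maps a nonzero fixed vector of
  \<open>P(s)\<close> to a nonzero fixed vector of \<open>P(t)\<close>. Normalising this eigenvector \<open>(x, y)\<close> of \<open>A\<close> and
  completing it to the unitary \<open>[[x, -y\<^sup>*], [y, x\<^sup>*]]\<close> diagonalises \<open>A\<close>.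
\<close>

section \<open>Continuous signed directions of a vector function with simple zeros\<close>

lemma has_vector_derivative_imp_tendsto_quotient:
  assumes "(f has_vector_derivative f') (at x within S)"
  shows "((\<lambda>y. (f y - f x) /\<^sub>R (y - x)) \<longlongrightarrow> f') (at x within S)"
proof -
  have "((\<lambda>y. (1 / norm (y - x)) *\<^sub>R (f y - (f x + (y - x) *\<^sub>R f'))) \<longlongrightarrow> 0) (at x within S)"
    using assms by (simp add: has_vector_derivative_def has_derivative_within)
  then have "((\<lambda>y. norm ((1 / norm (y - x)) *\<^sub>R (f y - (f x + (y - x) *\<^sub>R f')))) \<longlongrightarrow> 0) (at x within S)"
    by (rule tendsto_norm_zero)
  moreover have "\<forall>\<^sub>F y in at x within S.
      norm ((1 / norm (y - x)) *\<^sub>R (f y - (f x + (y - x) *\<^sub>R f'))) = norm ((f y - f x) /\<^sub>R (y - x) - f')"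
    unfolding eventually_at_filter
  proof (intro always_eventually allI impI)
    fix y assume "y \<noteq> x"
    have "(1 / (y - x)) *\<^sub>R (f y - (f x + (y - x) *\<^sub>R f'))
        = (f y - f x) /\<^sub>R (y - x) - (1 / (y - x)) *\<^sub>R ((y - x) *\<^sub>R f')"
      by (simp add: algebra_simps divide_inverse)
    also have "\<dots> = (f y - f x) /\<^sub>R (y - x) - f'"
      using \<open>y \<noteq> x\<close> by simp
    finally have "(f y - f x) /\<^sub>R (y - x) - f' = (1 / (y - x)) *\<^sub>R (f y - (f x + (y - x) *\<^sub>R f'))" ..
    then show "norm ((1 / norm (y - x)) *\<^sub>R (f y - (f x + (y - x) *\<^sub>R f'))) = norm ((f y - f x) /\<^sub>R (y - x) - f')"
      by simp
  qed
  ultimately have "((\<lambda>y. norm ((f y - f x) /\<^sub>R (y - x) - f')) \<longlongrightarrow> 0) (at x within S)"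
    by (rule Lim_transform_eventually)
  then show ?thesis
    by (simp add: tendsto_norm_zero_iff LIM_zero_iff)
qed

lemma tendsto_sgn_at_simple_zero:
  fixes v :: "real \<Rightarrow> 'a::real_normed_vector"
  assumes "(v has_vector_derivative v') (at z within S)" "v z = 0" "v' \<noteq> 0"
    and "\<And>y. y \<in> S \<Longrightarrow> y \<noteq> z \<Longrightarrow> sgn (y - z) = c"
  shows "((\<lambda>y. sgn (v y)) \<longlongrightarrow> c *\<^sub>R sgn v') (at z within S)"
proof -
  have "((\<lambda>y. c *\<^sub>R sgn (v y /\<^sub>R (y - z))) \<longlongrightarrow> c *\<^sub>R sgn v') (at z within S)"
    using has_vector_derivative_imp_tendsto_quotient[OF assms(1)] assms(2,3)
    by (intro tendsto_intros) auto
  moreover have "\<forall>\<^sub>F y in at z within S. c *\<^sub>R sgn (v y /\<^sub>R (y - z)) = sgn (v y)"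
    unfolding eventually_at_filter
  proof (intro always_eventually allI impI)
    fix y assume "y \<noteq> z" "y \<in> S"
    then have "v y = (y - z) *\<^sub>R (v y /\<^sub>R (y - z))" by simp
    then have "sgn (v y) = sgn (y - z) *\<^sub>R sgn (v y /\<^sub>R (y - z))" by (metis sgn_scaleR)
    then show "c *\<^sub>R sgn (v y /\<^sub>R (y - z)) = sgn (v y)" using assms(4) \<open>y \<noteq> z\<close> \<open>y \<in> S\<close> by simp
  qed
  ultimately show ?thesis by (rule Lim_transform_eventually)
qed

lemma tendsto_sgn_one_sided:
  fixes v :: "real \<Rightarrow> 'a::real_normed_vector"
  assumes "continuous_on S v" "t \<in> S" "T \<subseteq> S"
    and "v t = 0 \<Longrightarrow> (v has_vector_derivative v') (at t within S) \<and> v' \<noteq> 0"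
    and "\<And>y. y \<in> T \<Longrightarrow> y \<noteq> t \<Longrightarrow> sgn (y - t) = e"
  shows "((\<lambda>y. sgn (v y)) \<longlongrightarrow> (if v t = 0 then e *\<^sub>R sgn v' else sgn (v t))) (at t within T)"
proof (cases "v t = 0")
  case True
  then show ?thesis
    using assms by (auto intro: tendsto_sgn_at_simple_zero has_vector_derivative_within_subset)
next
  case False
  then show ?thesis
    using assms(1-3) by (auto intro!: tendsto_sgn intro: tendsto_within_subset
        simp: continuous_on_eq_continuous_within continuous_within)
qed

lemma eventually_card_less:
  fixes Z :: "real set"
  assumes "finite Z"
  shows "\<forall>\<^sub>F y in at t within S. y \<notin> Z \<and>
           card {z\<in>Z. z < y} = card {z\<in>Z. z < t} + (if t < y \<and> t \<in> Z then 1 else 0)"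
proof -
  obtain e where "e > 0" and e: "\<forall>z\<in>Z. z \<noteq> t \<longrightarrow> e \<le> dist t z"
    using finite_set_avoid[OF assms] by blast
  have "y \<notin> Z \<and> card {z\<in>Z. z < y} = card {z\<in>Z. z < t} + (if t < y \<and> t \<in> Z then 1 else 0)"
    if "y \<noteq> t" "dist y t < e" for y
  proof -
    have "z < y \<longleftrightarrow> z < t" if "z \<in> Z" "z \<noteq> t" for z
      using e \<open>dist y t < e\<close> that by (force simp: dist_real_def)
    then have "{z\<in>Z. z < y} = (if t < y \<and> t \<in> Z then insert t {z\<in>Z. z < t} else {z\<in>Z. z < t})"
      using \<open>y \<noteq> t\<close> by auto
    moreover have "y \<notin> Z"
      using e that by (auto simp: dist_commute)
    ultimately show ?thesis
      using assms by simp
  qed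
  then show ?thesis
    unfolding eventually_at using \<open>e > 0\<close> by blast
qed

lemma continuous_signed_direction:
  fixes v v' :: "real \<Rightarrow> 'a::real_normed_vector"
  assumes cont: "continuous_on {a..b} v"
    and fin: "finite {t\<in>{a..b}. v t = 0}"
    and simple: "\<And>t. t \<in> {a..b} \<Longrightarrow> v t = 0 \<Longrightarrow>
       (v has_vector_derivative v' t) (at t within {a..b}) \<and> v' t \<noteq> 0"
  shows "\<exists>n. continuous_on {a..b} n \<and>
    (\<forall>t\<in>{a..b}. \<exists>c\<in>{-1, 1}. n t = c *\<^sub>R sgn (if v t = 0 then v' t else v t))"
proof -
  define Z where "Z = {t\<in>{a..b}. v t = 0}"
  \<comment> \<open>The sign flips at each zero, where the one-sided limits of \<open>sgn \<circ> v\<close> are opposite.\<close>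
  define s where "s t = (-1::real) ^ card {z\<in>Z. z < t}" for t
  define n where "n t = (if v t = 0 then - s t *\<^sub>R sgn (v' t) else s t *\<^sub>R sgn (v t))" for t
  have "(n \<longlongrightarrow> n t) (at t within {a..b})" if t: "t \<in> {a..b}" for t
  proof -
    have finZ: "finite Z" and tZ: "t \<in> Z \<longleftrightarrow> v t = 0"
      using fin t by (simp_all add: Z_def)
    have notZ: "v y \<noteq> 0" if "y \<in> {a..b}" "y \<notin> Z" for y
      using that by (simp add: Z_def)
    have near: "\<forall>\<^sub>F y in at t within T. y \<in> T - {t} \<and>
        n y = (s t * (if t < y \<and> v t = 0 then -1 else 1)) *\<^sub>R sgn (v y)" if "T \<subseteq> {a..b}" for T
    proof -
      have "\<forall>\<^sub>F y in at t within T. y \<in> T - {t}"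
        by (simp add: eventually_at_filter)
      with eventually_card_less[OF finZ, of t T] show ?thesis
        by eventually_elim (use that notZ tZ in \<open>auto simp: n_def s_def power_add\<close>)
    qed
    have nt: "n t = s t *\<^sub>R (if v t = 0 then (-1) *\<^sub>R sgn (v' t) else sgn (v t))"
      "n t = (s t * (if v t = 0 then -1 else 1)) *\<^sub>R (if v t = 0 then 1 *\<^sub>R sgn (v' t) else sgn (v t))"
      by (simp_all add: n_def)
    have "{a..t} \<subseteq> {a..b}" using t by auto
    from near[OF this] have "\<forall>\<^sub>F y in at t within {a..t}. s t *\<^sub>R sgn (v y) = n y"
      by eventually_elim auto
    moreover have "((\<lambda>y. s t *\<^sub>R sgn (v y)) \<longlongrightarrow> n t) (at t within {a..t})"
      unfolding nt(1) using t simple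
      by (intro tendsto_scaleR tendsto_const tendsto_sgn_one_sided[OF cont]) auto
    ultimately have left: "(n \<longlongrightarrow> n t) (at t within {a..t})"
      by (rule Lim_transform_eventually[rotated])
    have "{t..b} \<subseteq> {a..b}" using t by auto
    from near[OF this] have "\<forall>\<^sub>F y in at t within {t..b}.
        (s t * (if v t = 0 then -1 else 1)) *\<^sub>R sgn (v y) = n y"
      by eventually_elim auto
    moreover have "((\<lambda>y. (s t * (if v t = 0 then -1 else 1)) *\<^sub>R sgn (v y)) \<longlongrightarrow> n t) (at t within {t..b})"
      unfolding nt(2) using t simple
      by (intro tendsto_scaleR tendsto_const tendsto_sgn_one_sided[OF cont]) auto
    ultimately have right: "(n \<longlongrightarrow> n t) (at t within {t..b})"
      by (rule Lim_transform_eventually[rotated])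
    have "{a..b} = {a..t} \<union> {t..b}" using t by auto
    then show ?thesis using left right Lim_within_Un by metis
  qed
  then have "continuous_on {a..b} n"
    by (simp add: continuous_on_def)
  moreover have "\<exists>c\<in>{-1, 1}. n t = c *\<^sub>R sgn (if v t = 0 then v' t else v t)" for t
  proof -
    have "s t \<in> {-1, 1}"
      unfolding s_def by (cases "even (card {z\<in>Z. z < t})") auto
    moreover have "n t = (if v t = 0 then - s t else s t) *\<^sub>R sgn (if v t = 0 then v' t else v t)"
      by (simp add: n_def)
    ultimately show ?thesis
      by (intro bexI[of _ "if v t = 0 then - s t else s t"]) auto
  qed
  ultimately show ?thesis by blast
qed

section \<open>Continuous fixed vectors of a continuous family of projections\<close>

lemma real_interval_step_induct:
  fixes a b d :: real
  assumes "a \<le> b" "d > 0" "P a" "\<And>s. s \<in> {a..b} \<Longrightarrow> P s \<Longrightarrow> P (min b (s + d))"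
  shows "P b"
proof -
  have steps: "P (min b (a + real k * d))" for k
  proof (induction k)
    case 0
    then show ?case using assms(1,3) by (simp add: min_absorb2)
  next
    case (Suc k)
    have "min b (a + real k * d) \<in> {a..b}" using assms(1,2) by auto
    moreover have "min b (min b (a + real k * d) + d) = min b (a + real (Suc k) * d)"
      using assms(2) by (auto simp: min_def algebra_simps)
    ultimately show ?case using assms(4) Suc.IH by metis
  qed
  obtain k where "b - a < real k * d"
    using ex_less_of_nat_mult[OF \<open>d > 0\<close>] by blast
  then have "min b (a + real k * d) = b"
    by (intro min_absorb1) linarith
  then show ?thesis using steps[of k] by simp
qed

lemma scaleR_matrix_vector_mult: "(r *\<^sub>R A) *v x = r *\<^sub>R (A *v (x :: 'a::real_algebra_1^'n))"
  by (simp add: vec_eq_iff matrix_vector_mult_def scaleR_sum_right)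

lemma bilinear_matrix_vector_mult: "bilinear ((*v) :: 'a::real_algebra_1^'n^'m \<Rightarrow> _)"
  unfolding bilinear_def
proof (intro conjI allI)
  show "linear (\<lambda>x. A *v x)" for A :: "'a^'n^'m"
    by (rule matrix_vector_mul_linear)
  show "linear (\<lambda>A. A *v x)" for x :: "'a^'n"
    by (rule linearI) (simp_all add: matrix_vector_mult_add_rdistrib scaleR_matrix_vector_mult)
qed

lemma matrix_fixed_vector_image_nonzero_uniform:
  fixes P :: "real \<Rightarrow> complex^'n^'n"
  assumes "continuous_on {a..b} P"
  obtains d where "d > 0"
    and "\<And>s t w. s \<in> {a..b} \<Longrightarrow> t \<in> {a..b} \<Longrightarrow> dist t s < d \<Longrightarrow> w \<noteq> 0 \<Longrightarrow> P s *v w = w \<Longrightarrow>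
           P t *v w \<noteq> 0"
proof -
  obtain K where "K > 0" and K: "\<And>M x. norm ((M :: complex^'n^'n) *v x) \<le> norm M * norm x * K"
    using bilinear_bounded_pos[OF bilinear_matrix_vector_mult] by (auto simp: ac_simps)
  have "uniformly_continuous_on {a..b} P"
    by (rule compact_uniformly_continuous[OF assms compact_Icc])
  moreover have "1 / K > 0" using \<open>K > 0\<close> by simp
  ultimately obtain d where "d > 0"
    and d: "\<forall>s\<in>{a..b}. \<forall>t\<in>{a..b}. dist t s < d \<longrightarrow> dist (P t) (P s) < 1 / K"
    unfolding uniformly_continuous_on_def by blast
  have "P t *v w \<noteq> 0"
    if "s \<in> {a..b}" "t \<in> {a..b}" "dist t s < d" "w \<noteq> 0" "P s *v w = w" for s t w
  proof
    assume "P t *v w = 0"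
    then have "norm w = norm ((P s - P t) *v w)"
      using that by (simp add: matrix_vector_mult_diff_rdistrib)
    also have "\<dots> \<le> norm (P s - P t) * norm w * K"
      by (rule K)
    also have "\<dots> < (1 / K) * norm w * K"
    proof -
      have "norm (P s - P t) = dist (P t) (P s)"
        by (simp only: dist_norm norm_minus_commute)
      also have "\<dots> < 1 / K"
        using d that(1-3) by blast
      finally show ?thesis
        using \<open>K > 0\<close> \<open>w \<noteq> 0\<close> by (intro mult_strict_right_mono) auto
    qed
    finally show False using \<open>K > 0\<close> by simp
  qed
  with \<open>d > 0\<close> show ?thesis using that by blast
qed

lemma continuous_fixed_vectors_extend:
  fixes P :: "real \<Rightarrow> complex^'n^'n"
  assumes u: "continuous_on {a..s} u" "\<And>t. t \<in> {a..s} \<Longrightarrow> u t \<noteq> 0 \<and> P t *v u t = u t"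
    and "a \<le> s" "s \<le> s'" "continuous_on {s..s'} P"
    and P: "\<And>t. t \<in> {s..s'} \<Longrightarrow> P t ** P t = P t \<and> P t *v u s \<noteq> 0"
  shows "\<exists>u'. continuous_on {a..s'} u' \<and> (\<forall>t\<in>{a..s'}. u' t \<noteq> 0 \<and> P t *v u' t = u' t)"
proof -
  define u' where "u' t = (if t \<le> s then u t else P t *v u s)" for t
  have "continuous_on {s..s'} (\<lambda>t. P t *v u s)"
    by (rule bounded_bilinear.continuous_on
        [OF bilinear_conv_bounded_bilinear[THEN iffD1, OF bilinear_matrix_vector_mult]
          \<open>continuous_on {s..s'} P\<close> continuous_on_const])
  then have "continuous_on ({a..s} \<union> {s..s'}) u'"
    unfolding u'_def using u(2)[of s] \<open>a \<le> s\<close>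
    by (intro continuous_on_cases[OF closed_atLeastAtMost closed_atLeastAtMost u(1)]) auto
  moreover have "{a..s} \<union> {s..s'} = {a..s'}"
    using \<open>a \<le> s\<close> \<open>s \<le> s'\<close> by auto
  moreover have "u' t \<noteq> 0 \<and> P t *v u' t = u' t" if "t \<in> {a..s'}" for t
    using u(2) P[of t] that
    by (cases "t \<le> s") (auto simp: u'_def matrix_vector_mul_assoc)
  ultimately show ?thesis
    by (metis (no_types, lifting))
qed

lemma continuous_fixed_vectors_of_projections:
  fixes P :: "real \<Rightarrow> complex^'n^'n"
  assumes "a \<le> b" and cont: "continuous_on {a..b} P"
    and idem: "\<And>t. t \<in> {a..b} \<Longrightarrow> P t ** P t = P t" and "P a \<noteq> 0"
  shows "\<exists>u. continuous_on {a..b} u \<and> (\<forall>t\<in>{a..b}. u t \<noteq> 0 \<and> P t *v u t = u t)"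
proof -
  obtain d where "d > 0" and d: "\<And>s t w. s \<in> {a..b} \<Longrightarrow> t \<in> {a..b} \<Longrightarrow> dist t s < d \<Longrightarrow>
      w \<noteq> 0 \<Longrightarrow> P s *v w = w \<Longrightarrow> P t *v w \<noteq> 0"
    using matrix_fixed_vector_image_nonzero_uniform[OF cont] by blast
  define Q where "Q s \<longleftrightarrow> (\<exists>u. continuous_on {a..s} u \<and> (\<forall>t\<in>{a..s}. u t \<noteq> 0 \<and> P t *v u t = u t))"
    for s
  have "Q a"
  proof -
    obtain w where "P a *v w \<noteq> 0"
      using \<open>P a \<noteq> 0\<close> matrix_eq[of "P a" 0] by auto
    moreover have "P a *v (P a *v w) = P a *v w"
      using idem[of a] \<open>a \<le> b\<close> by (simp add: matrix_vector_mul_assoc)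
    ultimately show ?thesis
      unfolding Q_def by (intro exI[of _ "\<lambda>_. P a *v w"]) auto
  qed
  moreover have "Q (min b (s + d / 2))" if s: "s \<in> {a..b}" and "Q s" for s
  proof -
    obtain u where u: "continuous_on {a..s} u" "\<And>t. t \<in> {a..s} \<Longrightarrow> u t \<noteq> 0 \<and> P t *v u t = u t"
      using \<open>Q s\<close> unfolding Q_def by blast
    have "P t ** P t = P t \<and> P t *v u s \<noteq> 0" if "t \<in> {s..min b (s + d / 2)}" for t
      using idem d[of s t "u s"] u(2)[of s] s that \<open>d > 0\<close> by (auto simp: dist_real_def)
    then show ?thesis
      unfolding Q_def using s \<open>d > 0\<close>
      by (intro continuous_fixed_vectors_extend[OF u] continuous_on_subset[OF cont]) auto
  qed
  ultimately have "Q b"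
    using \<open>a \<le> b\<close> \<open>d > 0\<close> by (intro real_interval_step_induct[of a b "d / 2" Q]) auto
  then show ?thesis unfolding Q_def by blast
qed

lemma norm_vec2_power2: "norm (x :: 'a::real_normed_vector^2) ^ 2 = norm (x$1) ^ 2 + norm (x$2) ^ 2"
  by (simp add: norm_vec_def L2_set_def sum_2)

lemma mat_matrix_vector_mult: "mat c *v x = c *s (x :: 'a::semiring_1^'n)"
  by (simp add: vec_eq_iff matrix_vector_mult_def mat_def if_distrib[of "\<lambda>a. a * _"] cong: if_cong)

lemma matrix_mult_scaleR_left: "(r *\<^sub>R A) ** B = r *\<^sub>R (A ** (B :: 'a::real_algebra_1^'p^'n))"
  by (simp add: vec_eq_iff matrix_matrix_mult_def scaleR_sum_right)

lemma matrix_mult_scaleR_right: "A ** (r *\<^sub>R B) = r *\<^sub>R (A ** (B :: 'a::real_algebra_1^'p^'n))"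
  by (simp add: vec_eq_iff matrix_matrix_mult_def scaleR_sum_right)

lemma matrix_add_rdistrib: "(A + B) ** C = A ** C + B ** (C :: 'a::semiring_1^'p^'n)"
  by (simp add: vec_eq_iff matrix_matrix_mult_def sum.distrib distrib_right)

lemma cmat_adj_scaleR: "cmat_adj (r *\<^sub>R M) = r *\<^sub>R cmat_adj M"
  by (simp add: cmat_adj_def vec_eq_iff)

lemma bounded_linear_cmat_adj: "bounded_linear (cmat_adj :: complex^'n^'m \<Rightarrow> complex^'m^'n)"
  unfolding linear_conv_bounded_linear[symmetric]
  by (rule linearI) (simp_all add: cmat_adj_def vec_eq_iff)

text \<open>Oriented with \<open>cnj\<close> on the left: the symmetric form loops as a rewrite rule.\<close>

lemma cmat_hermitian_nth: "cmat_hermitian M \<Longrightarrow> cnj (M $ j $ i) = M $ i $ j"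
  unfolding cmat_hermitian_def cmat_adj_def by (metis vec_lambda_beta)

lemma cmat_hermitian_scaleR: "cmat_hermitian M \<Longrightarrow> cmat_hermitian (r *\<^sub>R M)"
  by (simp add: cmat_hermitian_def cmat_adj_scaleR)

lemma hermitian_vector_derivative:
  fixes A :: "real \<Rightarrow> complex^'n^'n"
  assumes "a < b" "t \<in> {a..b}" "\<And>s. s \<in> {a..b} \<Longrightarrow> cmat_hermitian (A s)"
    and deriv: "(A has_vector_derivative A') (at t within {a..b})"
  shows "cmat_hermitian A'"
proof -
  have "((\<lambda>s. cmat_adj (A s)) has_vector_derivative cmat_adj A') (at t within {a..b})"
    by (rule bounded_linear.has_vector_derivative[OF bounded_linear_cmat_adj deriv])
  then have "(A has_vector_derivative cmat_adj A') (at t within {a..b})"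
    by (rule has_vector_derivative_transform[OF assms(2), rotated])
       (use assms(3) in \<open>simp add: cmat_hermitian_def\<close>)
  then show ?thesis
    using vector_derivative_unique_within_closed_interval[OF assms(1), of t A] assms(2) deriv
    by (simp add: cmat_hermitian_def cbox_interval)
qed

lemma cmat_eigenvalue_mat: "cmat_eigenvalue (mat c) l \<Longrightarrow> l = c"
  unfolding cmat_eigenvalue_def mat_matrix_vector_mult
  by (metis vector_sub_rdistrib vector_mul_eq_0 eq_iff_diff_eq_0)

lemma not_two_distinct_eigenvalues_mat: "\<not> two_distinct_eigenvalues (mat c)"
  unfolding two_distinct_eigenvalues_def using cmat_eigenvalue_mat by blast

lemma eigenvector_sgn:
  fixes M :: "complex^'n^'n"
  assumes "M *v u = l *s u"
  shows "M *v sgn u = l *s sgn u"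
proof -
  have "sgn u = complex_of_real (inverse (norm u)) *s u"
    by (simp add: sgn_vec_def vec_eq_iff scaleR_conv_of_real[where 'a = complex])
  then show ?thesis
    using assms by (simp add: vector_scalar_commute vector_smult_assoc mult.commute)
qed

section \<open>Hermitian \<open>2\<times>2\<close> matrices\<close>

definition traceless_part :: "complex^2^2 \<Rightarrow> complex^2^2" where
  "traceless_part M = 2 *\<^sub>R M - mat (M$1$1 + M$2$2)"

lemma bounded_linear_traceless_part: "bounded_linear traceless_part"
  unfolding linear_conv_bounded_linear[symmetric]
  by (rule linearI) (simp_all add: traceless_part_def vec_eq_iff mat_def algebra_simps)

lemma traceless_part_nth:
  "traceless_part M $ 1 $ 1 = M$1$1 - M$2$2" "traceless_part M $ 2 $ 2 = M$2$2 - M$1$1"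
  "traceless_part M $ 1 $ 2 = 2 * M$1$2" "traceless_part M $ 2 $ 1 = 2 * M$2$1"
  by (simp_all add: traceless_part_def mat_def scaleR_conv_of_real)

lemma cmat_adj_traceless_part: "cmat_adj (traceless_part M) = traceless_part (cmat_adj M)"
  by (simp add: vec_eq_iff forall_2 cmat_adj_def traceless_part_nth)

lemma traceless_part_eq_0_iff: "traceless_part M = 0 \<longleftrightarrow> M = mat ((M$1$1 + M$2$2) / 2)"
  by (auto simp: traceless_part_def vec_eq_iff forall_2 mat_def scaleR_conv_of_real field_simps)

lemma eigenvector_of_traceless_part:
  assumes "traceless_part M *v u = l *\<^sub>R u"
  shows "M *v u = ((of_real l + M$1$1 + M$2$2) / 2) *s u"
  using assms
  by (auto simp: vec_eq_iff forall_2 matrix_vector_mult_def sum_2 traceless_part_nth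
      scaleR_conv_of_real[where 'a = complex] field_simps)

definition traceless_hermitian :: "complex^2^2 \<Rightarrow> bool" where
  "traceless_hermitian N \<longleftrightarrow> cmat_hermitian N \<and> N$1$1 + N$2$2 = 0"

lemma traceless_hermitian_traceless_part:
  "cmat_hermitian M \<Longrightarrow> traceless_hermitian (traceless_part M)"
  by (simp add: traceless_hermitian_def cmat_hermitian_def cmat_adj_traceless_part traceless_part_nth)

lemma traceless_hermitian_scaleR: "traceless_hermitian N \<Longrightarrow> traceless_hermitian (r *\<^sub>R N)"
  by (simp add: traceless_hermitian_def cmat_hermitian_scaleR flip: scaleR_add_right)

lemma traceless_hermitian_square:
  assumes "traceless_hermitian N"
  shows "N ** N = (norm N ^ 2 / 2) *\<^sub>R mat 1"
proof -
  have herm: "cmat_hermitian N" and tr: "N$1$1 + N$2$2 = 0"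
    using assms by (simp_all add: traceless_hermitian_def)
  have h: "N$2$1 = cnj (N$1$2)" "N$2$2 = - N$1$1" "N$1$1 * N$1$1 = N$1$1 * cnj (N$1$1)"
    using cmat_hermitian_nth[OF herm, of 1 2] cmat_hermitian_nth[OF herm, of 1 1] tr
    by (simp_all add: eq_neg_iff_add_eq_0 add.commute)
  have "norm N ^ 2 / 2 = cmod (N$1$1) ^ 2 + cmod (N$1$2) ^ 2"
    by (simp add: norm_vec2_power2 h(1,2))
  then have "complex_of_real (norm N ^ 2 / 2) = of_real (cmod (N$1$1) ^ 2) + of_real (cmod (N$1$2) ^ 2)"
    by simp
  also have "\<dots> = N$1$1 * cnj (N$1$1) + N$1$2 * cnj (N$1$2)"
    by (simp only: complex_norm_square)
  finally have "(norm N ^ 2 / 2) *\<^sub>R (1::complex) = N$1$1 * cnj (N$1$1) + N$1$2 * cnj (N$1$2)"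
    by (simp add: scaleR_conv_of_real)
  then show ?thesis
    by (simp add: vec_eq_iff forall_2 matrix_matrix_mult_def sum_2 mat_def h algebra_simps)
qed

text \<open>
  \<open>norm\<close> is the Frobenius norm, so a traceless hermitian \<open>N\<close> with \<open>norm N = 1\<close> has the
  eigenvalues \<open>\<plusminus>1/\<surd>2\<close>, and this is the orthogonal projection onto the eigenline of \<open>1/\<surd>2\<close>.
\<close>

definition positive_eigenprojection :: "complex^2^2 \<Rightarrow> complex^2^2" where
  "positive_eigenprojection N = (1/2) *\<^sub>R mat 1 + (1 / sqrt 2) *\<^sub>R N"

lemma positive_eigenprojection_idem:
  assumes "traceless_hermitian N" "norm N = 1"
  shows "positive_eigenprojection N ** positive_eigenprojection N = positive_eigenprojection N"
proof -
  have "N ** N = (1/2) *\<^sub>R mat 1"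
    using traceless_hermitian_square[OF assms(1)] assms(2) by simp
  then show ?thesis
    by (simp add: positive_eigenprojection_def matrix_add_ldistrib matrix_add_rdistrib
        matrix_mult_scaleR_left matrix_mult_scaleR_right vec_eq_iff
        scaleR_conv_of_real[where 'a = complex] field_simps)
qed

lemma positive_eigenprojection_nonzero:
  assumes "traceless_hermitian N"
  shows "positive_eigenprojection N \<noteq> 0"
proof
  assume "positive_eigenprojection N = 0"
  then have "positive_eigenprojection N $ 1 $ 1 + positive_eigenprojection N $ 2 $ 2 = 0"
    by simp
  moreover have "N $ 2 $ 2 = - N $ 1 $ 1"
    using assms by (simp add: traceless_hermitian_def eq_neg_iff_add_eq_0 add.commute)
  then have "positive_eigenprojection N $ 1 $ 1 + positive_eigenprojection N $ 2 $ 2 = 1"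
    by (simp add: positive_eigenprojection_def mat_def scaleR_conv_of_real[where 'a = complex])
  ultimately show False by simp
qed

lemma positive_eigenprojection_fixed:
  assumes "positive_eigenprojection N *v u = u"
  shows "N *v u = (1 / sqrt 2) *\<^sub>R u"
proof -
  have "(1/2) *\<^sub>R u + (1 / sqrt 2) *\<^sub>R (N *v u) = u"
    using assms by (simp add: positive_eigenprojection_def matrix_vector_mult_add_rdistrib
        scaleR_matrix_vector_mult)
  then have "(1 / sqrt 2) *\<^sub>R (N *v u) = u - (1/2) *\<^sub>R u"
    by (metis add_diff_cancel_left')
  also have "\<dots> = (1 - 1/2) *\<^sub>R u"
    by (simp add: scaleR_diff_left)
  finally have "(1 / sqrt 2) *\<^sub>R (N *v u) = (1/2) *\<^sub>R u"
    by simp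
  then have "sqrt 2 *\<^sub>R ((1 / sqrt 2) *\<^sub>R (N *v u)) = sqrt 2 *\<^sub>R ((1/2) *\<^sub>R u)"
    by simp
  then show ?thesis
    by (simp add: real_div_sqrt)
qed

definition unitary_completion :: "complex^2 \<Rightarrow> complex^2^2" where
  "unitary_completion u =
     (\<chi> i j. if j = 1 then u $ i else if i = 1 then - cnj (u $ 2) else cnj (u $ 1))"

lemma unitary_completion_nth:
  "unitary_completion u $ 1 $ 1 = u $ 1" "unitary_completion u $ 2 $ 1 = u $ 2"
  "unitary_completion u $ 1 $ 2 = - cnj (u $ 2)" "unitary_completion u $ 2 $ 2 = cnj (u $ 1)"
  by (simp_all add: unitary_completion_def)

lemma continuous_on_unitary_completion:
  assumes "continuous_on S u"
  shows "continuous_on S (\<lambda>t. unitary_completion (u t))"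
  unfolding unitary_completion_def
proof (intro continuous_on_vec_lambda)
  fix i j :: 2
  show "continuous_on S (\<lambda>t. if j = 1 then u t $ i else if i = 1 then - cnj (u t $ 2) else cnj (u t $ 1))"
    using assms by (cases "j = 1"; cases "i = 1") (simp_all add: continuous_intros)
qed

lemma cmat_unitary_unitary_completion:
  assumes "norm u = 1"
  shows "cmat_unitary (unitary_completion u)"
proof -
  have "complex_of_real (norm u ^ 2) = u$1 * cnj (u$1) + u$2 * cnj (u$2)"
    by (simp only: norm_vec2_power2 of_real_add complex_norm_square)
  then have n: "u$1 * cnj (u$1) + u$2 * cnj (u$2) = 1" "cnj (u$1) * u$1 + cnj (u$2) * u$2 = 1"
    using assms by (simp_all add: mult.commute)
  show ?thesis
    unfolding cmat_unitary_def
    by (simp add: vec_eq_iff forall_2 matrix_matrix_mult_def sum_2 cmat_adj_def unitary_completion_nth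
        mat_def n algebra_simps)
qed

lemma cmat_diagonal_unitary_completion:
  assumes "cmat_hermitian M" and eig: "M *v u = l *s u"
  shows "cmat_diagonal (cmat_adj (unitary_completion u) ** M ** unitary_completion u)"
proof -
  let ?U = "unitary_completion u"
  have h: "cnj (M$1$1) = M$1$1" "cnj (M$2$2) = M$2$2" "M$2$1 = cnj (M$1$2)"
    using cmat_hermitian_nth[OF assms(1)] by (metis complex_cnj_cnj)+
  have e1: "M$1$1 * u$1 + M$1$2 * u$2 = l * u$1" and e2: "M$2$1 * u$1 + M$2$2 * u$2 = l * u$2"
    using eig by (simp_all add: vec_eq_iff forall_2 matrix_vector_mult_def sum_2)
  have e1': "M$1$1 * cnj (u$1) + cnj (M$1$2) * cnj (u$2) = cnj l * cnj (u$1)"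
    using arg_cong[OF e1, of cnj] h by simp
  have e2': "M$1$2 * cnj (u$1) + M$2$2 * cnj (u$2) = cnj l * cnj (u$2)"
    using arg_cong[OF e2, of cnj] h by simp
  have "(cmat_adj ?U ** M ** ?U) $ 1 $ 2 =
      cnj (u$1) * (M$1$2 * cnj (u$1) + M$2$2 * cnj (u$2)) - cnj (u$2) * (M$1$1 * cnj (u$1) + cnj (M$1$2) * cnj (u$2))"
    by (simp add: matrix_matrix_mult_def sum_2 cmat_adj_def unitary_completion_nth h(3) algebra_simps)
  also have "\<dots> = 0" by (simp only: e1' e2') (simp add: algebra_simps)
  finally have A: "(cmat_adj ?U ** M ** ?U) $ 1 $ 2 = 0" .
  have "(cmat_adj ?U ** M ** ?U) $ 2 $ 1 =
      - u$2 * (M$1$1 * u$1 + M$1$2 * u$2) + u$1 * (M$2$1 * u$1 + M$2$2 * u$2)"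
    by (simp add: matrix_matrix_mult_def sum_2 cmat_adj_def unitary_completion_nth algebra_simps)
  also have "\<dots> = 0" by (simp only: e1 e2) (simp add: algebra_simps)
  finally have B: "(cmat_adj ?U ** M ** ?U) $ 2 $ 1 = 0" .
  show ?thesis
    unfolding cmat_diagonal_def using A B by (auto simp: forall_2)
qed

section \<open>Continuous diagonalisation\<close>

lemma continuous_traceless_direction:
  fixes A A' :: "real \<Rightarrow> complex^2^2"
  assumes "a < b" and cont: "continuous_on {a..b} A"
    and herm: "\<And>t. t \<in> {a..b} \<Longrightarrow> cmat_hermitian (A t)"
    and deriv: "\<And>t. t \<in> {a..b} \<Longrightarrow> (A has_vector_derivative A' t) (at t within {a..b})"
    and fin: "finite {t\<in>{a..b}. \<not> two_distinct_eigenvalues (A t)}"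
    and simple: "\<And>t. t \<in> {a..b} \<Longrightarrow> \<not> two_distinct_eigenvalues (A t) \<Longrightarrow> two_distinct_eigenvalues (A' t)"
  shows "\<exists>n. continuous_on {a..b} n \<and> (\<forall>t\<in>{a..b}.
           traceless_hermitian (n t) \<and> norm (n t) = 1 \<and> (\<exists>r. traceless_part (A t) = r *\<^sub>R n t))"
proof -
  define B where "B t = traceless_part (A t)" for t
  define B' where "B' t = traceless_part (A' t)" for t
  have scalar: "\<not> two_distinct_eigenvalues M" if "traceless_part M = 0" for M
    using that traceless_part_eq_0_iff not_two_distinct_eigenvalues_mat by metis
  have th: "traceless_hermitian (B t)" "traceless_hermitian (B' t)" if "t \<in> {a..b}" for t
    using herm hermitian_vector_derivative[OF \<open>a < b\<close> that herm deriv] that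
    by (simp_all add: B_def B'_def traceless_hermitian_traceless_part)
  have "continuous_on {a..b} B"
    unfolding B_def by (rule bounded_linear.continuous_on[OF bounded_linear_traceless_part cont])
  moreover have "finite {t\<in>{a..b}. B t = 0}"
    by (rule finite_subset[OF _ fin]) (auto simp: B_def dest: scalar)
  moreover have simple_zero: "(B has_vector_derivative B' t) (at t within {a..b}) \<and> B' t \<noteq> 0"
    if "t \<in> {a..b}" "B t = 0" for t
    using bounded_linear.has_vector_derivative[OF bounded_linear_traceless_part deriv[OF that(1)]]
      simple[OF that(1)] that(2) scalar
    by (auto simp: B_def[abs_def] B'_def)
  ultimately obtain n where "continuous_on {a..b} n"
    and n: "\<And>t. t \<in> {a..b} \<Longrightarrow> \<exists>c\<in>{-1, 1}. n t = c *\<^sub>R sgn (if B t = 0 then B' t else B t)"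
    using continuous_signed_direction[of a b B B'] by blast
  moreover have "traceless_hermitian (n t) \<and> norm (n t) = 1 \<and> (\<exists>r. B t = r *\<^sub>R n t)"
    if t: "t \<in> {a..b}" for t
  proof -
    define C where "C = (if B t = 0 then B' t else B t)"
    obtain c where c: "c \<in> {-1, 1}" "n t = c *\<^sub>R sgn C"
      using n[OF t] unfolding C_def by blast
    have "C \<noteq> 0" "traceless_hermitian C"
      using simple_zero[OF t] th[OF t] by (auto simp: C_def)
    then have "traceless_hermitian (n t)" "norm (n t) = 1"
      using c by (auto simp: sgn_div_norm traceless_hermitian_scaleR norm_sgn)
    moreover have "B t = (if B t = 0 then 0 else c * norm (B t)) *\<^sub>R n t"
      using c by (auto simp: C_def sgn_div_norm)
    ultimately show ?thesis by blast
  qed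
  ultimately show ?thesis unfolding B_def by blast
qed

lemma continuous_eigenvector_family:
  fixes A A' :: "real \<Rightarrow> complex^2^2"
  assumes "a < b" and "continuous_on {a..b} A"
    and "\<And>t. t \<in> {a..b} \<Longrightarrow> cmat_hermitian (A t)"
    and "\<And>t. t \<in> {a..b} \<Longrightarrow> (A has_vector_derivative A' t) (at t within {a..b})"
    and "finite {t\<in>{a..b}. \<not> two_distinct_eigenvalues (A t)}"
    and "\<And>t. t \<in> {a..b} \<Longrightarrow> \<not> two_distinct_eigenvalues (A t) \<Longrightarrow> two_distinct_eigenvalues (A' t)"
  shows "\<exists>u. continuous_on {a..b} u \<and> (\<forall>t\<in>{a..b}. u t \<noteq> 0 \<and> (\<exists>l. A t *v u t = l *s u t))"
proof -
  obtain n where "continuous_on {a..b} n"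
    and n: "\<And>t. t \<in> {a..b} \<Longrightarrow> traceless_hermitian (n t) \<and> norm (n t) = 1 \<and>
              (\<exists>r. traceless_part (A t) = r *\<^sub>R n t)"
    using continuous_traceless_direction[OF assms] by blast
  then have "continuous_on {a..b} (\<lambda>t. positive_eigenprojection (n t))"
    unfolding positive_eigenprojection_def by (intro continuous_intros)
  then obtain u where "continuous_on {a..b} u"
    and u: "\<And>t. t \<in> {a..b} \<Longrightarrow> u t \<noteq> 0 \<and> positive_eigenprojection (n t) *v u t = u t"
    using continuous_fixed_vectors_of_projections[of a b "\<lambda>t. positive_eigenprojection (n t)"]
      \<open>a < b\<close> n positive_eigenprojection_idem positive_eigenprojection_nonzero
    by force
  moreover have "\<exists>l. A t *v u t = l *s u t" if t: "t \<in> {a..b}" for t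
  proof -
    obtain r where "traceless_part (A t) = r *\<^sub>R n t" using n[OF t] by blast
    then have "traceless_part (A t) *v u t = (r / sqrt 2) *\<^sub>R u t"
      using positive_eigenprojection_fixed u[OF t] by (simp add: scaleR_matrix_vector_mult)
    then show ?thesis by (blast intro: eigenvector_of_traceless_part)
  qed
  ultimately show ?thesis by blast
qed

theorem mainTheorem4:
  fixes a b :: real and A A' :: "real \<Rightarrow> complex^2^2"
  assumes "a < b"
    and "continuous_on {a..b} A"
    and "\<forall>t\<in>{a..b}. cmat_hermitian (A t)"
    and "\<forall>t\<in>{a..b}. (A has_vector_derivative A' t) (at t within {a..b})"
    and "continuous_on {a..b} A'"
    and "finite {t\<in>{a..b}. \<not> two_distinct_eigenvalues (A t)}"
    and "\<forall>t\<in>{a..b}. \<not> two_distinct_eigenvalues (A t) \<longrightarrow> two_distinct_eigenvalues (A' t)"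
  shows "\<exists>U :: real \<Rightarrow> complex^2^2. continuous_on {a..b} U \<and>
           (\<forall>t\<in>{a..b}. cmat_unitary (U t) \<and>
              cmat_diagonal (cmat_adj (U t) ** A t ** U t))"
proof -
  obtain u where "continuous_on {a..b} u"
    and u: "\<And>t. t \<in> {a..b} \<Longrightarrow> u t \<noteq> 0 \<and> (\<exists>l. A t *v u t = l *s u t)"
    using continuous_eigenvector_family[of a b A A'] assms by blast
  then have "continuous_on {a..b} (\<lambda>t. unitary_completion (sgn (u t)))"
    by (intro continuous_on_unitary_completion continuous_on_sgn) auto
  moreover have "cmat_unitary (unitary_completion (sgn (u t))) \<and>
      cmat_diagonal (cmat_adj (unitary_completion (sgn (u t))) ** A t ** unitary_completion (sgn (u t)))"
    if "t \<in> {a..b}" for t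
    using u[OF that] assms(3) that
    by (auto simp: norm_sgn intro: cmat_unitary_unitary_completion
        cmat_diagonal_unitary_completion eigenvector_sgn)
  ultimately show ?thesis by blast
qed

end
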